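(* Let $(G,\rho)$ be a ribbon graph with a vertex $v$. Let $e_1\neq e_2$ be two edges incident to $v$ lying in the same $v$-component, and let $w_1,w_2$ be their other endpoints respectively. Then there exists a spanning tree $T$ of $G$ such that (i) $e_1\in T$, (ii) $e_2\notin T$, and (iii) the path in $T$ from $w_2$ to $v$ passes through $w_1$.
   Context: Graphs are finite, connected, loopless, possibly with multiple edges. A ribbon graph assigns to each vertex a cyclic order on its incident edges. For a vertex $v$, a $v$-component of $(G,\rho)$ is the full ribbon subgraph induced on the vertex set of a connected component of $G\setminus v$ together with $v$. *)

theory Defs
  imports Main
begin

definition multigraph :: "'v set \<Rightarrow> 'e set \<Rightarrow> ('e \<Rightarrow> 'v set) \<Rightarrow> bool" where
  "multigraph V E ends \<longleftrightarrow> finite V \<and> finite E \<and>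
     (\<forall>e\<in>E. ends e \<subseteq> V \<and> card (ends e) = 2)"

definition walk :: "('e \<Rightarrow> 'v set) \<Rightarrow> 'e set \<Rightarrow> 'v list \<Rightarrow> 'e list \<Rightarrow> bool" where
  "walk ends F vs es \<longleftrightarrow> vs \<noteq> [] \<and> length vs = Suc (length es) \<and> set es \<subseteq> F \<and>
     (\<forall>i<length es. ends (es ! i) = {vs ! i, vs ! Suc i})"

definition path :: "('e \<Rightarrow> 'v set) \<Rightarrow> 'e set \<Rightarrow> 'v list \<Rightarrow> 'e list \<Rightarrow> bool" where
  "path ends F vs es \<longleftrightarrow> walk ends F vs es \<and> distinct vs"

definition cycle :: "('e \<Rightarrow> 'v set) \<Rightarrow> 'e set \<Rightarrow> 'v list \<Rightarrow> 'e list \<Rightarrow> bool" where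
  "cycle ends F vs es \<longleftrightarrow> walk ends F vs es \<and> es \<noteq> [] \<and> distinct es \<and>
     hd vs = last vs \<and> distinct (tl vs)"

definition connected_on :: "'v set \<Rightarrow> 'e set \<Rightarrow> ('e \<Rightarrow> 'v set) \<Rightarrow> bool" where
  "connected_on V F ends \<longleftrightarrow> V \<noteq> {} \<and>
     (\<forall>x\<in>V. \<forall>y\<in>V. \<exists>vs es. walk ends F vs es \<and> set vs \<subseteq> V \<and> hd vs = x \<and> last vs = y)"

definition acyclic_on :: "'e set \<Rightarrow> ('e \<Rightarrow> 'v set) \<Rightarrow> bool" where
  "acyclic_on F ends \<longleftrightarrow> \<not> (\<exists>vs es. cycle ends F vs es)"

definition spanning_tree :: "'v set \<Rightarrow> 'e set \<Rightarrow> ('e \<Rightarrow> 'v set) \<Rightarrow> 'e set \<Rightarrow> bool" where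
  "spanning_tree V E ends T \<longleftrightarrow> T \<subseteq> E \<and> connected_on V T ends \<and> acyclic_on T ends"

definition incident_edges :: "'e set \<Rightarrow> ('e \<Rightarrow> 'v set) \<Rightarrow> 'v \<Rightarrow> 'e set" where
  "incident_edges E ends u = {e\<in>E. u \<in> ends e}"

text \<open>A ribbon graph: a connected loopless multigraph together with, at each vertex u,
  a cyclic order on its incident edges, given as a cyclic permutation rho u of them.\<close>
definition ribbon_graph :: "'v set \<Rightarrow> 'e set \<Rightarrow> ('e \<Rightarrow> 'v set) \<Rightarrow> ('v \<Rightarrow> 'e \<Rightarrow> 'e) \<Rightarrow> bool" where
  "ribbon_graph V E ends rho \<longleftrightarrow> multigraph V E ends \<and> connected_on V E ends \<and>
     (\<forall>u\<in>V. bij_betw (rho u) (incident_edges E ends u) (incident_edges E ends u) \<and>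
        (\<forall>e\<in>incident_edges E ends u. \<forall>e'\<in>incident_edges E ends u.
           \<exists>n. (rho u ^^ n) e = e'))"

text \<open>Vertex sets of the v-components: for each connected component C of G \<setminus> v,
  the v-component is the full subgraph induced on C \<union> {v}.\<close>
definition delete_vertex_edges :: "'e set \<Rightarrow> ('e \<Rightarrow> 'v set) \<Rightarrow> 'v \<Rightarrow> 'e set" where
  "delete_vertex_edges E ends v = {e\<in>E. v \<notin> ends e}"

definition component_of :: "'v set \<Rightarrow> 'e set \<Rightarrow> ('e \<Rightarrow> 'v set) \<Rightarrow> 'v \<Rightarrow> 'v set" where
  "component_of V F ends x = {y\<in>V. \<exists>vs es. walk ends F vs es \<and> set vs \<subseteq> V \<and> hd vs = x \<and> last vs = y}"

definition v_component_vertex_sets :: "'v set \<Rightarrow> 'e set \<Rightarrow> ('e \<Rightarrow> 'v set) \<Rightarrow> 'v \<Rightarrow> 'v set set" where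
  "v_component_vertex_sets V E ends v =
     {component_of (V - {v}) (delete_vertex_edges E ends v) ends x \<union> {v} | x. x \<in> V - {v}}"

definition induced_edges :: "'e set \<Rightarrow> ('e \<Rightarrow> 'v set) \<Rightarrow> 'v set \<Rightarrow> 'e set" where
  "induced_edges E ends U = {e\<in>E. ends e \<subseteq> U}"

definition same_v_component :: "'v set \<Rightarrow> 'e set \<Rightarrow> ('e \<Rightarrow> 'v set) \<Rightarrow> 'v \<Rightarrow> 'e \<Rightarrow> 'e \<Rightarrow> bool" where
  "same_v_component V E ends v e1 e2 \<longleftrightarrow>
     (\<exists>U\<in>v_component_vertex_sets V E ends v. e1 \<in> induced_edges E ends U \<and> e2 \<in> induced_edges E ends U)"

end

theory Submission
  imports Defs
begin

(* Take a spanning forest T1 of G - v. Since e1 and e2 lie in the same v-component, w1 and w2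
   are joined in T1, while v is isolated there; so T1 + e1 is still acyclic, and we extend it to a
   maximal acyclic subset T of E - {e2}. T is a spanning tree: the endpoints of e2 are joined in T
   through e1 and the T1-path from w1 to w2. A walk in T from w2 to v that avoided w1 would avoid
   e1, and together with the T1-path it would join w1 and v in T - {e1}, closing a cycle with e1. *)

definition reachable :: "('e \<Rightarrow> 'v set) \<Rightarrow> 'e set \<Rightarrow> 'v \<Rightarrow> 'v \<Rightarrow> bool" where
  "reachable ends F x y \<longleftrightarrow> (\<exists>vs es. walk ends F vs es \<and> hd vs = x \<and> last vs = y)"

subsection \<open>Walks\<close>

lemma walk_Nil: "walk ends F vs [] \<longleftrightarrow> (\<exists>x. vs = [x])"
  by (auto simp: walk_def length_Suc_conv)

lemma walk_nonempty: "walk ends F vs es \<Longrightarrow> vs \<noteq> []"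
  by (simp add: walk_def)

lemma walk_Cons:
  "walk ends F (x # vs) (g # es) \<longleftrightarrow> g \<in> F \<and> ends g = {x, hd vs} \<and> walk ends F vs es"
proof
  assume "walk ends F (x # vs) (g # es)"
  then have len: "length vs = Suc (length es)" and edges: "set (g # es) \<subseteq> F"
    and ends: "\<And>i. i < Suc (length es) \<Longrightarrow> ends ((g # es) ! i) = {(x # vs) ! i, (x # vs) ! Suc i}"
    by (auto simp: walk_def)
  have "vs \<noteq> []" using len by auto
  then have "ends g = {x, hd vs}" using ends[of 0] by (simp add: hd_conv_nth)
  moreover have "\<forall>i<length es. ends (es ! i) = {vs ! i, vs ! Suc i}"
    using ends[of "Suc _"] by simp
  ultimately show "g \<in> F \<and> ends g = {x, hd vs} \<and> walk ends F vs es"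
    using len edges \<open>vs \<noteq> []\<close> by (auto simp: walk_def)
next
  assume H: "g \<in> F \<and> ends g = {x, hd vs} \<and> walk ends F vs es"
  then have "vs \<noteq> []" by (simp add: walk_def)
  show "walk ends F (x # vs) (g # es)" unfolding walk_def
  proof (intro conjI allI impI)
    fix i assume "i < length (g # es)"
    then show "ends ((g # es) ! i) = {(x # vs) ! i, (x # vs) ! Suc i}"
      using H \<open>vs \<noteq> []\<close> by (cases i) (auto simp: walk_def hd_conv_nth)
  qed (use H in \<open>auto simp: walk_def\<close>)
qed

lemma walk_induct [consumes 1, case_names Nil Cons]:
  assumes "walk ends F vs es"
    and "\<And>x. P [x] []"
    and "\<And>x g vs es. g \<in> F \<Longrightarrow> ends g = {x, hd vs} \<Longrightarrow> walk ends F vs es \<Longrightarrow> P vs es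
           \<Longrightarrow> P (x # vs) (g # es)"
  shows "P vs es"
  using assms(1)
proof (induction es arbitrary: vs)
  case Nil
  then show ?case using assms(2) by (auto simp: walk_Nil)
next
  case (Cons g es)
  then obtain x vs' where "vs = x # vs'" by (cases vs) (auto simp: walk_def)
  then show ?case using Cons assms(3) by (auto simp: walk_Cons)
qed

lemma walk_append:
  assumes "walk ends F vs1 es1" "walk ends F vs2 es2" "last vs1 = hd vs2"
  shows "walk ends F (vs1 @ tl vs2) (es1 @ es2)"
  using assms
proof (induction rule: walk_induct)
  case (Nil x)
  then show ?case using walk_nonempty[OF Nil(1)] by (cases vs2) auto
next
  case (Cons x g vs es)
  have "vs \<noteq> []" using walk_nonempty[OF Cons(3)] .
  then show ?case using Cons by (auto simp: walk_Cons)
qed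

lemma walk_rev: "walk ends F vs es \<Longrightarrow> walk ends F (rev vs) (rev es)"
proof (induction rule: walk_induct)
  case (Nil x)
  then show ?case by (simp add: walk_Nil)
next
  case (Cons x g vs es)
  have "vs \<noteq> []" using walk_nonempty[OF Cons(3)] .
  have "walk ends F [hd vs, x] [g]"
    using Cons by (auto simp: walk_Cons walk_Nil insert_commute)
  from walk_append[OF Cons(4) this] \<open>vs \<noteq> []\<close> show ?case by (simp add: last_rev)
qed

lemma walk_mono: "walk ends F vs es \<Longrightarrow> set es \<subseteq> F' \<Longrightarrow> walk ends F' vs es"
  by (auto simp: walk_def)

lemma walk_drop: "walk ends F vs es \<Longrightarrow> i \<le> length es \<Longrightarrow> walk ends F (drop i vs) (drop i es)"
  by (auto simp: walk_def dest: in_set_dropD)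

lemma walk_edge_ends_subset: "walk ends F vs es \<Longrightarrow> g \<in> set es \<Longrightarrow> ends g \<subseteq> set vs"
proof (induction rule: walk_induct)
  case (Cons x g' vs es)
  then show ?case using walk_nonempty[OF Cons(3)] by auto
qed simp

lemma walk_in_vertices:
  assumes "multigraph V E ends" "F \<subseteq> E" "walk ends F vs es" "hd vs \<in> V"
  shows "set vs \<subseteq> V"
  using assms(3,4)
proof (induction rule: walk_induct)
  case (Cons x g vs es)
  have "hd vs \<in> V" using Cons(1,2) assms(1,2) by (auto simp: multigraph_def)
  then show ?case using Cons by auto
qed simp

lemma path_distinct_edges:
  assumes "path ends F vs es"
  shows "distinct es"
proof -
  have "walk ends F vs es \<Longrightarrow> distinct vs \<Longrightarrow> distinct es"
  proof (induction rule: walk_induct)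
    case (Cons x g vs es)
    then have "g \<notin> set es" using walk_edge_ends_subset[OF Cons(3)] by auto
    then show ?case using Cons by auto
  qed simp
  then show ?thesis using assms by (simp add: path_def)
qed

lemma walk_shortcut_to_path:
  "walk ends F vs es \<Longrightarrow> \<exists>pvs pes. path ends F pvs pes \<and> hd pvs = hd vs \<and> last pvs = last vs"
proof (induction rule: walk_induct)
  case (Nil x)
  have "path ends F [x] []" by (simp add: path_def walk_Nil)
  then show ?case by fastforce
next
  case (Cons x g vs es)
  obtain pvs pes where P: "path ends F pvs pes" "hd pvs = hd vs" "last pvs = last vs"
    using Cons(4) by blast
  have "vs \<noteq> []" "pvs \<noteq> []" using walk_nonempty[OF Cons(3)] P(1) by (auto simp: path_def walk_def)
  show ?case
  proof (cases "x \<in> set pvs")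
    case False
    then have "path ends F (x # pvs) (g # pes)" using P Cons(1,2) by (auto simp: path_def walk_Cons)
    then show ?thesis using P \<open>vs \<noteq> []\<close> \<open>pvs \<noteq> []\<close> by fastforce
  next
    case True
    then obtain i where i: "i < length pvs" "pvs ! i = x" by (auto simp: in_set_conv_nth)
    have "length pvs = Suc (length pes)" using P(1) by (simp add: path_def walk_def)
    then have "walk ends F (drop i pvs) (drop i pes)"
      using P(1) i by (intro walk_drop) (auto simp: path_def)
    then have "path ends F (drop i pvs) (drop i pes)" using P(1) by (simp add: path_def)
    moreover have "hd (drop i pvs) = x" "last (drop i pvs) = last pvs"
      using i by (simp_all add: hd_drop_conv_nth)
    ultimately show ?thesis using P \<open>vs \<noteq> []\<close> by fastforce
  qed
qed

subsection \<open>Reachability\<close>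

lemma reachable_refl: "reachable ends F x x"
  unfolding reachable_def by (rule exI[of _ "[x]"], rule exI[of _ "[]"]) (simp add: walk_Nil)

lemma reachable_sym: "reachable ends F x y \<Longrightarrow> reachable ends F y x"
  unfolding reachable_def using walk_rev walk_nonempty by (metis hd_rev last_rev)

lemma reachable_trans: "reachable ends F x y \<Longrightarrow> reachable ends F y z \<Longrightarrow> reachable ends F x z"
proof -
  assume "reachable ends F x y" "reachable ends F y z"
  then obtain vs1 es1 vs2 es2 where W: "walk ends F vs1 es1" "hd vs1 = x" "last vs1 = y"
    "walk ends F vs2 es2" "hd vs2 = y" "last vs2 = z" by (auto simp: reachable_def)
  obtain r where "vs2 = y # r" using W(4,5) walk_nonempty by (cases vs2) auto
  then have "hd (vs1 @ tl vs2) = x" "last (vs1 @ tl vs2) = z"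
    using W walk_nonempty[OF W(1)] by (auto simp: last_append)
  with walk_append[OF W(1,4)] W(3,5) show ?thesis by (auto simp: reachable_def)
qed

lemma reachable_mono: "reachable ends F x y \<Longrightarrow> F \<subseteq> F' \<Longrightarrow> reachable ends F' x y"
  unfolding reachable_def by (metis walk_def walk_mono subset_trans)

lemma reachable_edge: "g \<in> F \<Longrightarrow> ends g = {x, y} \<Longrightarrow> reachable ends F x y"
  unfolding reachable_def
  by (rule exI[of _ "[x, y]"], rule exI[of _ "[g]"]) (simp add: walk_Cons walk_Nil)

lemma reachable_edges_lift:
  assumes "\<And>g p q. g \<in> B \<Longrightarrow> ends g = {p, q} \<Longrightarrow> reachable ends T p q"
    and "reachable ends B x y"
  shows "reachable ends T x y"
proof -
  obtain vs es where "walk ends B vs es" "hd vs = x" "last vs = y"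
    using assms(2) by (auto simp: reachable_def)
  moreover have "walk ends B vs es \<Longrightarrow> reachable ends T (hd vs) (last vs)"
  proof (induction rule: walk_induct)
    case (Cons x g vs es)
    then have "reachable ends T x (hd vs)" using assms(1) by blast
    then show ?case using Cons(4) walk_nonempty[OF Cons(3)] reachable_trans by fastforce
  qed (simp add: reachable_refl)
  ultimately show ?thesis by blast
qed

lemma reachable_insert_cases:
  assumes "ends e = {a, b}" "reachable ends (insert e F) x y"
  shows "reachable ends F x y \<or> (reachable ends F x a \<and> reachable ends F b y)
           \<or> (reachable ends F x b \<and> reachable ends F a y)"
proof -
  obtain vs es where W: "walk ends (insert e F) vs es" "hd vs = x" "last vs = y"
    using assms(2) by (auto simp: reachable_def)
  have "reachable ends F (hd vs) (last vs)
      \<or> (reachable ends F (hd vs) a \<and> reachable ends F b (last vs))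
      \<or> (reachable ends F (hd vs) b \<and> reachable ends F a (last vs))"
    using W(1)
  proof (induction rule: walk_induct)
    case (Nil x)
    then show ?case using reachable_refl by (metis last.simps list.sel(1))
  next
    case (Cons x g vs es)
    have last: "last (x # vs) = last vs" using walk_nonempty[OF Cons(3)] by simp
    show ?case
    proof (cases "g = e")
      case True
      then have "(x = a \<and> hd vs = b) \<or> (x = b \<and> hd vs = a)"
        using Cons(2) assms(1) by (auto simp: doubleton_eq_iff)
      then show ?thesis
        using Cons(4) last reachable_refl reachable_trans reachable_sym by (smt (verit) list.sel(1))
    next
      case False
      then have "reachable ends F x (hd vs)" using Cons(1,2) reachable_edge by fastforce
      then show ?thesis using Cons(4) last reachable_trans by (metis list.sel(1))
    qed
  qed
  then show ?thesis using W by simp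
qed

lemma reachable_from_isolated:
  assumes "\<forall>g\<in>F. x \<notin> ends g" "reachable ends F x y"
  shows "y = x"
proof -
  obtain vs es where W: "walk ends F vs es" "hd vs = x" "last vs = y"
    using assms(2) by (auto simp: reachable_def)
  have "walk ends F vs es \<Longrightarrow> \<forall>g\<in>F. hd vs \<notin> ends g \<Longrightarrow> last vs = hd vs"
    by (induction rule: walk_induct) auto
  then show ?thesis using W assms(1) by simp
qed

subsection \<open>Forests\<close>

lemma acyclic_on_edge_not_reachable:
  assumes "acyclic_on F ends" "e \<in> F" "ends e = {a, b}"
  shows "\<not> reachable ends (F - {e}) a b"
proof
  assume "reachable ends (F - {e}) a b"
  then obtain pvs pes where P: "path ends (F - {e}) pvs pes" "hd pvs = a" "last pvs = b"
    unfolding reachable_def using walk_shortcut_to_path by metis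
  then have pw: "walk ends (F - {e}) pvs pes" and "distinct pvs" by (auto simp: path_def)
  obtain r where r: "pvs = a # r" using walk_nonempty[OF pw] P(2) by (cases pvs) auto
  have "walk ends F pvs pes" using pw by (auto simp: walk_def)
  moreover have "walk ends F [b, a] [e]" using assms by (auto simp: walk_Cons walk_Nil insert_commute)
  ultimately have "walk ends F (pvs @ [a]) (pes @ [e])" using walk_append P(3) by fastforce
  moreover have "distinct (pes @ [e])"
    using path_distinct_edges[OF P(1)] pw by (auto simp: walk_def)
  ultimately have "cycle ends F (pvs @ [a]) (pes @ [e])"
    using \<open>distinct pvs\<close> r by (auto simp: cycle_def)
  then show False using assms(1) by (auto simp: acyclic_on_def)
qed

lemma acyclic_onI:
  assumes "\<And>e a b. e \<in> F \<Longrightarrow> ends e = {a, b} \<Longrightarrow> \<not> reachable ends (F - {e}) a b"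
  shows "acyclic_on F ends"
  unfolding acyclic_on_def
proof
  assume "\<exists>vs es. cycle ends F vs es"
  then obtain vs es where C: "cycle ends F vs es" by blast
  then obtain g es' x vs' where es: "es = g # es'" and vs: "vs = x # vs'"
    by (cases es; cases vs) (auto simp: cycle_def walk_def)
  then have g: "g \<in> F" "ends g = {x, hd vs'}" and W: "walk ends F vs' es'"
    using C by (auto simp: cycle_def walk_Cons)
  have "g \<notin> set es'" using C es by (simp add: cycle_def)
  then have "walk ends (F - {g}) vs' es'" using W by (auto simp: walk_def)
  moreover have "last vs' = x" using C vs walk_nonempty[OF W] by (simp add: cycle_def)
  ultimately have "reachable ends (F - {g}) (hd vs') x" by (auto simp: reachable_def)
  then have "reachable ends (F - {g}) x (hd vs')" by (rule reachable_sym)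
  then show False using assms[OF g] by simp
qed

lemma acyclic_on_empty: "acyclic_on {} ends"
  by (auto simp: acyclic_on_def cycle_def walk_def)

lemma acyclic_on_insert:
  assumes "acyclic_on T ends" "ends e = {a, b}" "\<not> reachable ends T a b"
  shows "acyclic_on (insert e T) ends"
proof (rule acyclic_onI)
  have "e \<notin> T" using assms reachable_edge by metis
  fix f c d assume f: "f \<in> insert e T" "ends f = {c, d}"
  show "\<not> reachable ends (insert e T - {f}) c d"
  proof
    assume C: "reachable ends (insert e T - {f}) c d"
    show False
    proof (cases "f = e")
      case True
      then have "reachable ends T c d" using C \<open>e \<notin> T\<close> by simp
      then show False using f True assms(2,3) reachable_sym by (metis doubleton_eq_iff)
    next
      case False
      then have "f \<in> T" and eq: "insert e T - {f} = insert e (T - {f})" using f by auto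
      have "\<not> reachable ends (T - {f}) c d"
        using acyclic_on_edge_not_reachable[OF assms(1) \<open>f \<in> T\<close> f(2)] .
      with reachable_insert_cases[OF assms(2) C[unfolded eq]]
      have "reachable ends T c a \<and> reachable ends T b d \<or> reachable ends T c b \<and> reachable ends T a d"
        by (meson Diff_subset reachable_mono)
      moreover have "reachable ends T c d" using reachable_edge \<open>f \<in> T\<close> f(2) by metis
      ultimately have "reachable ends T a b" using reachable_sym reachable_trans by metis
      then show False using assms(3) by simp
    qed
  qed
qed

lemma acyclic_on_extend_maximal:
  assumes "finite B" "acyclic_on A ends" "A \<subseteq> B"
  obtains T where "acyclic_on T ends" "A \<subseteq> T" "T \<subseteq> B"
    "\<And>g p q. g \<in> B \<Longrightarrow> ends g = {p, q} \<Longrightarrow> reachable ends T p q"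
proof -
  let ?P = "\<lambda>T. acyclic_on T ends \<and> A \<subseteq> T \<and> T \<subseteq> B"
  have "\<forall>T. ?P T \<longrightarrow> card T < Suc (card B)"
    using assms(1) by (simp add: card_mono less_Suc_eq_le)
  then obtain T where T: "?P T" and max: "\<And>T'. ?P T' \<Longrightarrow> card T' \<le> card T"
    using ex_has_greatest_nat[of ?P A card "Suc (card B)"] assms by blast
  have "finite T" using T assms(1) finite_subset by blast
  have "reachable ends T p q" if g: "g \<in> B" "ends g = {p, q}" for g p q
  proof (rule ccontr)
    assume "\<not> reachable ends T p q"
    then have "g \<notin> T" and "?P (insert g T)"
      using reachable_edge acyclic_on_insert g T by (metis, auto)
    then show False using max[of "insert g T"] \<open>finite T\<close> by simp
  qed
  then show ?thesis using that T by blast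
qed

lemma spanning_forest_exists:
  assumes "finite B"
  obtains T where "acyclic_on T ends" "T \<subseteq> B" "\<And>x y. reachable ends B x y \<Longrightarrow> reachable ends T x y"
proof -
  obtain T where "acyclic_on T ends" "T \<subseteq> B"
    and "\<And>g p q. g \<in> B \<Longrightarrow> ends g = {p, q} \<Longrightarrow> reachable ends T p q"
    using assms acyclic_on_empty[of ends] by (rule acyclic_on_extend_maximal) blast+
  then show ?thesis using that reachable_edges_lift by metis
qed

lemma spanning_treeI:
  assumes "multigraph V E ends" "connected_on V E ends" "T \<subseteq> E" "acyclic_on T ends"
    and "\<And>g p q. g \<in> E \<Longrightarrow> ends g = {p, q} \<Longrightarrow> reachable ends T p q"
  shows "spanning_tree V E ends T"
  unfolding spanning_tree_def connected_on_def
proof (intro conjI ballI)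
  show "V \<noteq> {}" using assms(2) by (simp add: connected_on_def)
next
  fix a b assume "a \<in> V" "b \<in> V"
  then have "reachable ends E a b" using assms(2) unfolding connected_on_def reachable_def by blast
  with assms(5) have "reachable ends T a b" by (rule reachable_edges_lift)
  then obtain vs es where W: "walk ends T vs es" "hd vs = a" "last vs = b"
    by (auto simp: reachable_def)
  then show "\<exists>vs es. walk ends T vs es \<and> set vs \<subseteq> V \<and> hd vs = a \<and> last vs = b"
    using walk_in_vertices[OF assms(1,3) W(1)] \<open>a \<in> V\<close> by blast
qed (use assms in auto)

text \<open>Removing a forest edge {a, b} separates a from b, so a walk to a from
  b's side must come back through b.\<close>

lemma acyclic_on_walk_visits_edge_end:
  assumes "acyclic_on T ends" "e \<in> T" "ends e = {a, b}"
    and "reachable ends (T - {e}) b c"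
    and "walk ends T vs es" "hd vs = c" "last vs = a"
  shows "b \<in> set vs"
proof (rule ccontr)
  assume "b \<notin> set vs"
  then have "set es \<subseteq> T - {e}"
    using assms(3,5) walk_edge_ends_subset[OF assms(5)] by (auto simp: walk_def)
  then have "reachable ends (T - {e}) c a"
    using walk_mono[OF assms(5)] assms(6,7) by (auto simp: reachable_def)
  with assms(4) have "reachable ends (T - {e}) a b" by (meson reachable_sym reachable_trans)
  then show False using acyclic_on_edge_not_reachable[OF assms(1-3)] by blast
qed

lemma same_v_component_reachable:
  assumes "same_v_component V E ends v e1 e2"
    and "ends e1 = {v, w1}" "ends e2 = {v, w2}" "w1 \<noteq> v" "w2 \<noteq> v"
  shows "reachable ends (delete_vertex_edges E ends v) w1 w2"
proof -
  let ?D = "delete_vertex_edges E ends v"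
  obtain x where "ends e1 \<union> ends e2 \<subseteq> component_of (V - {v}) ?D ends x \<union> {v}"
    using assms(1) by (auto simp: same_v_component_def v_component_vertex_sets_def induced_edges_def)
  then have "reachable ends ?D x w1" "reachable ends ?D x w2"
    using assms(2-5) by (auto simp: component_of_def reachable_def)
  then show ?thesis by (meson reachable_sym reachable_trans)
qed

theorem lemma4p2:
  fixes V :: "'v set" and E :: "'e set" and ends :: "'e \<Rightarrow> 'v set"
    and rho :: "'v \<Rightarrow> 'e \<Rightarrow> 'e" and v w1 w2 :: 'v and e1 e2 :: 'e
  assumes "ribbon_graph V E ends rho"
    and "v \<in> V"
    and "e1 \<in> E" and "e2 \<in> E" and "e1 \<noteq> e2"
    and "ends e1 = {v, w1}" and "ends e2 = {v, w2}"
    and "same_v_component V E ends v e1 e2"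
  shows "\<exists>T. spanning_tree V E ends T \<and> e1 \<in> T \<and> e2 \<notin> T \<and>
           (\<forall>vs es. path ends T vs es \<and> hd vs = w2 \<and> last vs = v \<longrightarrow> w1 \<in> set vs)"
proof -
  define D where "D = delete_vertex_edges E ends v"
  have G: "multigraph V E ends" "connected_on V E ends" using assms(1) by (auto simp: ribbon_graph_def)
  then have "finite E" "card {v, w1} = 2" "card {v, w2} = 2"
    using assms(3,4,6,7) by (auto simp: multigraph_def)
  then have "w1 \<noteq> v" "w2 \<noteq> v" by auto
  have "D \<subseteq> E" "e1 \<notin> D" "e2 \<notin> D" and v_isolated: "\<forall>g\<in>D. v \<notin> ends g"
    using assms(6,7) by (auto simp: D_def delete_vertex_edges_def)
  have "finite D" using \<open>D \<subseteq> E\<close> \<open>finite E\<close> by (rule finite_subset)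
  then obtain T1 where T1: "acyclic_on T1 ends" "T1 \<subseteq> D"
    and T1_reach: "\<And>x y. reachable ends D x y \<Longrightarrow> reachable ends T1 x y"
    by (rule spanning_forest_exists[where ends = ends]) blast
  have "reachable ends T1 w1 w2"
    using T1_reach same_v_component_reachable[OF assms(8,6,7) \<open>w1 \<noteq> v\<close> \<open>w2 \<noteq> v\<close>]
    by (simp add: D_def)
  have "\<not> reachable ends T1 v w1"
    using reachable_from_isolated[of T1 v ends w1] v_isolated T1(2) \<open>w1 \<noteq> v\<close> by auto
  with T1(1) assms(6) have "acyclic_on (insert e1 T1) ends" by (rule acyclic_on_insert)
  moreover have "insert e1 T1 \<subseteq> E - {e2}"
    using T1(2) \<open>D \<subseteq> E\<close> \<open>e2 \<notin> D\<close> assms(3,5) by auto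
  ultimately obtain T where T: "acyclic_on T ends" "insert e1 T1 \<subseteq> T" "T \<subseteq> E - {e2}"
    "\<And>g p q. g \<in> E - {e2} \<Longrightarrow> ends g = {p, q} \<Longrightarrow> reachable ends T p q"
    by (rule acyclic_on_extend_maximal[OF finite_Diff[OF \<open>finite E\<close>]]) blast+
  have "T1 \<subseteq> T - {e1}" using T(2) T1(2) \<open>e1 \<notin> D\<close> by auto
  with \<open>reachable ends T1 w1 w2\<close> have w1_w2: "reachable ends (T - {e1}) w1 w2"
    by (rule reachable_mono)
  have "reachable ends T v w1" using T(2) assms(6) by (auto intro: reachable_edge)
  moreover have "reachable ends T w1 w2" using w1_w2 by (rule reachable_mono) auto
  ultimately have "reachable ends T v w2" by (rule reachable_trans)
  then have "reachable ends T p q" if "g \<in> E" "ends g = {p, q}" for g p q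
    using T(4) that assms(7) by (cases "g = e2") (auto simp: doubleton_eq_iff intro: reachable_sym)
  then have "spanning_tree V E ends T" using spanning_treeI[OF G] T(1,3) by blast
  then show ?thesis
    using acyclic_on_walk_visits_edge_end[OF T(1) _ assms(6) w1_w2] T(2,3) by (auto simp: path_def)
qed

end
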